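(* Let $A,B:\mathbb{R}^n\rightrightarrows\mathbb{R}^n$ be maximally monotone with $B$ $\beta$-cocoercive for some $\beta>0$, and suppose the solution set $X^\star=\{x:0\in Ax+Bx\}$ is nonempty. Suppose the problem $0\in Ax+Bx$ satisfies restricted strong monotonicity with modulus $\mu_f>0$. Let $\lambda\in(0,2)$, $0<\gamma\le\beta$, assume the DR operator $T$ has a fixed point, and let $w^1\in\mathbb{R}^n$. Then $T$ satisfies the error bound condition on $W=\{w:\operatorname{dist}_{W^\star}(w)\le\operatorname{dist}_{W^\star}(w^1)\}$ with constant $$\mu=\frac{\gamma+\gamma\min(\mu_f\beta,1)+\beta}{\lambda\gamma\min(\mu_f\beta,1)}.$$
   Context: For a maximally monotone operator $M$, $J_M=(I+M)^{-1}$ and $R_M=2J_M-I$. The DR operator is $T=(1-\tfrac{\lambda}{2})I+\tfrac{\lambda}{2}R_{\gamma A}R_{\gamma B}$ and $W^\star$ denotes its set of fixed points; $\operatorname{dist}_{W^\star}$ is the Euclidean distance to $W^\star$. $B$ is $\beta$-cocoercive if $\langle u-v,x-y\rangle\ge\beta\|u-v\|^2$ for all $(x,u),(y,v)$ in the graph of $B$. Restricted strong monotonicity with modulus $\mu_f>0$: for all $x\in\mathbb{R}^n$, all $u\in Ax$, $v\in Bx$, $\langle u+v,x-x^\star\rangle\ge\mu_f\|x-x^\star\|^2$ where $x^\star=\Pi_{X^\star}(x)$ is the Euclidean projection of $x$ onto $X^\star$. Error bound condition: $T$ satisfies it on $W$ with constant $\mu\ge0$ if $\operatorname{dist}_{W^\star}(w)\le\mu\|(I-T)w\|$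 for all $w\in W$. *)

theory Defs
  imports "HOL-Analysis.Analysis"
begin

definition monotone_op :: "('a::euclidean_space \<Rightarrow> 'a set) \<Rightarrow> bool" where
  "monotone_op M \<longleftrightarrow> (\<forall>x y u v. u \<in> M x \<longrightarrow> v \<in> M y \<longrightarrow> inner (u - v) (x - y) \<ge> 0)"

definition max_monotone_op :: "('a::euclidean_space \<Rightarrow> 'a set) \<Rightarrow> bool" where
  "max_monotone_op M \<longleftrightarrow> monotone_op M \<and>
     (\<forall>x u. (\<forall>y v. v \<in> M y \<longrightarrow> inner (u - v) (x - y) \<ge> 0) \<longrightarrow> u \<in> M x)"

definition cocoercive_op :: "real \<Rightarrow> ('a::euclidean_space \<Rightarrow> 'a set) \<Rightarrow> bool" where
  "cocoercive_op \<beta> M \<longleftrightarrow>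
     (\<forall>x y u v. u \<in> M x \<longrightarrow> v \<in> M y \<longrightarrow> inner (u - v) (x - y) \<ge> \<beta> * (norm (u - v))\<^sup>2)"

definition scale_op :: "real \<Rightarrow> ('a::euclidean_space \<Rightarrow> 'a set) \<Rightarrow> ('a \<Rightarrow> 'a set)" where
  "scale_op \<gamma> M = (\<lambda>x. (\<lambda>u. \<gamma> *\<^sub>R u) ` M x)"

text \<open>Resolvent \<open>J_M = (I + M)^{-1}\<close>: \<open>J_M x\<close> is the (unique, for maximally monotone M)
  point y with \<open>x \<in> y + M y\<close>.\<close>
definition resolvent :: "('a::euclidean_space \<Rightarrow> 'a set) \<Rightarrow> 'a \<Rightarrow> 'a" where
  "resolvent M x = (THE y. x - y \<in> M y)"

definition reflected_resolvent :: "('a::euclidean_space \<Rightarrow> 'a set) \<Rightarrow> 'a \<Rightarrow> 'a" where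
  "reflected_resolvent M x = 2 *\<^sub>R resolvent M x - x"

definition DR_op :: "real \<Rightarrow> real \<Rightarrow> ('a::euclidean_space \<Rightarrow> 'a set) \<Rightarrow> ('a \<Rightarrow> 'a set) \<Rightarrow> 'a \<Rightarrow> 'a" where
  "DR_op lam \<gamma> A B w =
     (1 - lam / 2) *\<^sub>R w + (lam / 2) *\<^sub>R
        reflected_resolvent (scale_op \<gamma> A) (reflected_resolvent (scale_op \<gamma> B) w)"

definition fixed_points :: "('a \<Rightarrow> 'a) \<Rightarrow> 'a set" where
  "fixed_points T = {w. T w = w}"

definition solution_set :: "('a::euclidean_space \<Rightarrow> 'a set) \<Rightarrow> ('a \<Rightarrow> 'a set) \<Rightarrow> 'a set" where
  "solution_set A B = {x. \<exists>u \<in> A x. \<exists>v \<in> B x. u + v = 0}"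

definition restricted_strongly_monotone ::
  "real \<Rightarrow> ('a::euclidean_space \<Rightarrow> 'a set) \<Rightarrow> ('a \<Rightarrow> 'a set) \<Rightarrow> bool" where
  "restricted_strongly_monotone \<mu>f A B \<longleftrightarrow>
     (\<forall>x u v. u \<in> A x \<longrightarrow> v \<in> B x \<longrightarrow>
        inner (u + v) (x - closest_point (solution_set A B) x)
          \<ge> \<mu>f * (norm (x - closest_point (solution_set A B) x))\<^sup>2)"

definition error_bound_on :: "('a::euclidean_space \<Rightarrow> 'a) \<Rightarrow> 'a set \<Rightarrow> real \<Rightarrow> bool" where
  "error_bound_on T W \<mu> \<longleftrightarrow> \<mu> \<ge> 0 \<and>
     (\<forall>w \<in> W. infdist w (fixed_points T) \<le> \<mu> * norm (w - T w))"

end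

theory Submission
  imports Defs
begin

(* Minty's theorem (from Brouwer's fixed point theorem and the finite intersection property of
   the balls 0 \<le> \<langle>w - x - v, x - y\<rangle>) makes the resolvents everywhere defined, and cocoercivity
   makes B single-valued and Lipschitz, so X* is closed and every x has a projection p onto X*.
   For z = J\<^sub>\<gamma>\<^sub>B w and x = J\<^sub>\<gamma>\<^sub>A (2z - w) one has w - T w = \<lambda> (z - x), and p + \<gamma> B p is a
   fixed point of T.  Cocoercivity of B at (x, p) and at (z, x), together with restricted strong
   monotonicity at x, are three quadratic inequalities in e = x - p, d = z - x and the two
   differences of values of B; an explicit sum-of-squares certificate combines them into
   \<nu> |e + \<gamma> (B z - B p)| \<le> (1 + \<gamma>/\<beta>) |d|  with  \<nu> = \<gamma> min(\<mu>f \<beta>, 1) / \<beta>,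
   and the triangle inequality gives the constant. *)

section \<open>Maximal monotone operators and Minty's theorem\<close>

lemma monotone_opD:
  "monotone_op M \<Longrightarrow> u \<in> M x \<Longrightarrow> v \<in> M y \<Longrightarrow> 0 \<le> inner (u - v) (x - y)"
  unfolding monotone_op_def by blast

lemma max_monotone_op_monotone: "max_monotone_op M \<Longrightarrow> monotone_op M"
  unfolding max_monotone_op_def by blast

lemma max_monotone_opI:
  "max_monotone_op M \<Longrightarrow> (\<And>y v. v \<in> M y \<Longrightarrow> 0 \<le> inner (u - v) (x - y)) \<Longrightarrow> u \<in> M x"
  unfolding max_monotone_op_def by blast

lemma max_monotone_op_graph_nonempty:
  assumes "max_monotone_op M"
  obtains x u where "u \<in> M x"
proof (cases "\<exists>x u. u \<in> M x")
  case False
  then have "0 \<in> M 0" by (intro max_monotone_opI[OF assms]) auto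
  then show ?thesis using that by blast
qed blast

lemma scale_op_mem_iff: "\<gamma> \<noteq> 0 \<Longrightarrow> u \<in> scale_op \<gamma> M x \<longleftrightarrow> u /\<^sub>R \<gamma> \<in> M x"
  unfolding scale_op_def by (auto simp: image_iff intro!: bexI[of _ "u /\<^sub>R \<gamma>"])

lemma monotone_op_scale_op:
  assumes "monotone_op M" and "\<gamma> \<ge> 0"
  shows "monotone_op (scale_op \<gamma> M)"
  unfolding monotone_op_def scale_op_def
  using monotone_opD[OF assms(1)] assms(2)
  by (auto simp: scaleR_diff_right[symmetric] simp del: scaleR_diff_right)

lemma max_monotone_op_scale_op:
  assumes M: "max_monotone_op M" and "\<gamma> > 0"
  shows "max_monotone_op (scale_op \<gamma> M)"
  unfolding max_monotone_op_def
proof (intro conjI allI impI)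
  show "monotone_op (scale_op \<gamma> M)"
    using monotone_op_scale_op[OF max_monotone_op_monotone[OF M]] \<open>\<gamma> > 0\<close> by simp
  fix x u
  assume u: "\<forall>y v. v \<in> scale_op \<gamma> M y \<longrightarrow> 0 \<le> inner (u - v) (x - y)"
  have "u /\<^sub>R \<gamma> \<in> M x"
  proof (rule max_monotone_opI[OF M])
    fix y v assume "v \<in> M y"
    then have "\<gamma> *\<^sub>R v \<in> scale_op \<gamma> M y" unfolding scale_op_def by (rule imageI)
    then have "0 \<le> inner (u - \<gamma> *\<^sub>R v) (x - y)" using u by blast
    also have "u - \<gamma> *\<^sub>R v = \<gamma> *\<^sub>R (u /\<^sub>R \<gamma> - v)" using \<open>\<gamma> > 0\<close> by (simp add: algebra_simps)
    finally show "0 \<le> inner (u /\<^sub>R \<gamma> - v) (x - y)"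
      using \<open>\<gamma> > 0\<close> by (simp add: zero_le_mult_iff)
  qed
  then show "u \<in> scale_op \<gamma> M x" using \<open>\<gamma> > 0\<close> by (simp add: scale_op_mem_iff)
qed

lemma inner_nonneg_iff_mem_cball:
  fixes c x y :: "'a::real_inner"
  shows "0 \<le> inner (c - x) (x - y) \<longleftrightarrow> x \<in> cball (midpoint c y) (dist c y / 2)"
proof -
  define m where "m = midpoint c y"
  have "m + m = c + y" unfolding m_def by (rule midpoint_plus_self)
  then have "c - m = m - y" by (simp add: algebra_simps)
  then have "inner (c - x) (x - y) = (norm (c - m))\<^sup>2 - (norm (m - x))\<^sup>2"
    by (smt (verit) diff_add_cancel inner_commute inner_diff_left inner_diff_right power2_norm_eq_inner)
  moreover have "norm (c - m) = dist c y / 2" unfolding m_def by (metis dist_midpoint(1) dist_norm)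
  ultimately show ?thesis
    unfolding m_def[symmetric] mem_cball dist_norm
    by (smt (verit) norm_ge_zero power_mono zero_le_divide_iff power2_le_imp_le)
qed

lemma weighted_average_fixed_point:
  fixes y :: "'i \<Rightarrow> 'a::euclidean_space" and l :: "'i \<Rightarrow> 'a \<Rightarrow> real"
  assumes I: "finite I"
    and cont: "\<And>i. i \<in> I \<Longrightarrow> continuous_on UNIV (l i)"
    and nonneg: "\<And>i x. i \<in> I \<Longrightarrow> 0 \<le> l i x"
    and pos: "\<And>x. 0 < (\<Sum>i\<in>I. l i x)"
  obtains x where "(\<Sum>i\<in>I. l i x) *\<^sub>R x = (\<Sum>i\<in>I. l i x *\<^sub>R y i)"
proof -
  define f where "f x = (\<Sum>i\<in>I. (l i x / (\<Sum>j\<in>I. l j x)) *\<^sub>R y i)" for x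
  define K where "K = convex hull (y ` I)"
  have "compact K" "convex K" unfolding K_def using I
    by (simp_all add: compact_convex_hull finite_imp_compact)
  moreover have "K \<noteq> {}" unfolding K_def using pos[of 0] by (cases "I = {}") auto
  moreover have "continuous_on K f" unfolding f_def
    using pos cont
    by (intro continuous_intros) (auto intro: continuous_on_subset dest: less_imp_neq[symmetric])
  moreover have "f \<in> K \<rightarrow> K"
  proof
    fix x
    show "f x \<in> K" unfolding f_def K_def
    proof (rule convex_sum[OF I convex_convex_hull])
      show "(\<Sum>i\<in>I. l i x / (\<Sum>j\<in>I. l j x)) = 1"
        using pos[of x] by (simp add: sum_divide_distrib[symmetric])
    qed (use pos[of x] nonneg in \<open>auto simp: hull_inc\<close>)
  qed
  ultimately obtain x where "f x = x" by (rule brouwer)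
  then have "(\<Sum>i\<in>I. l i x) *\<^sub>R x = (\<Sum>i\<in>I. l i x) *\<^sub>R f x" by simp
  also have "\<dots> = (\<Sum>i\<in>I. l i x *\<^sub>R y i)"
    unfolding f_def using pos[of x] by (simp add: scaleR_sum_right)
  finally show ?thesis by (rule that)
qed

lemma monotone_weighted_sum_nonneg:
  fixes F :: "('a::real_inner \<times> 'a) set"
  assumes F: "finite F"
    and mono: "\<And>p q. p \<in> F \<Longrightarrow> q \<in> F \<Longrightarrow> 0 \<le> inner (snd p - snd q) (fst p - fst q)"
    and l: "\<And>p. p \<in> F \<Longrightarrow> 0 \<le> l p"
    and avg: "(\<Sum>p\<in>F. l p) *\<^sub>R x = (\<Sum>p\<in>F. l p *\<^sub>R fst p)"
  shows "0 \<le> (\<Sum>p\<in>F. l p) * (\<Sum>p\<in>F. l p * inner (w - x - snd p) (x - fst p))"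
proof -
  define Q where "Q p q = l p * l q * inner (w - x - snd p) (fst q - fst p)" for p q
  have row: "(\<Sum>q\<in>F. l q) * inner (w - x - snd p) (x - fst p)
      = (\<Sum>q\<in>F. l q * inner (w - x - snd p) (fst q - fst p))" for p
  proof -
    have "(\<Sum>q\<in>F. l q) *\<^sub>R (x - fst p) = (\<Sum>q\<in>F. l q *\<^sub>R (fst q - fst p))"
      using avg by (simp add: scaleR_diff_right scaleR_sum_left sum_subtractf)
    then show ?thesis
      by (metis (no_types, lifting) inner_scaleR_right inner_sum_right sum.cong)
  qed
  have "(\<Sum>p\<in>F. l p) * (\<Sum>p\<in>F. l p * inner (w - x - snd p) (x - fst p))
      = (\<Sum>p\<in>F. l p * ((\<Sum>q\<in>F. l q) * inner (w - x - snd p) (x - fst p)))"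
    by (simp add: sum_distrib_left mult.left_commute)
  also have "\<dots> = (\<Sum>p\<in>F. \<Sum>q\<in>F. Q p q)"
    unfolding row Q_def by (simp add: sum_distrib_left mult.assoc)
  also have "\<dots> = (\<Sum>p\<in>F. \<Sum>q\<in>F. Q p q + Q q p) / 2"
    using sum.swap[of Q F F] by (simp add: sum.distrib)
  also have "\<dots> \<ge> 0"
  proof -
    \<comment> \<open>symmetrizing cancels the \<open>w - x\<close> terms and leaves the monotonicity pairings\<close>
    have "Q p q + Q q p = l p * l q * inner (snd p - snd q) (fst p - fst q)" for p q
      unfolding Q_def by (simp add: inner_diff_left inner_diff_right inner_commute algebra_simps)
    then show ?thesis using mono l by (auto intro!: sum_nonneg divide_nonneg_pos)
  qed
  finally show ?thesis .
qed

lemma finite_monotone_extension: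
  fixes F :: "('a::euclidean_space \<times> 'a) set"
  assumes F: "finite F"
    and mono: "\<And>p q. p \<in> F \<Longrightarrow> q \<in> F \<Longrightarrow> 0 \<le> inner (snd p - snd q) (fst p - fst q)"
  shows "\<exists>x. \<forall>p\<in>F. 0 \<le> inner (w - x - snd p) (x - fst p)"
proof (rule ccontr)
  define \<phi> where "\<phi> p x = inner (w - x - snd p) (x - fst p)" for p x
  define \<psi> where "\<psi> p x = max 0 (- \<phi> p x)" for p x
  assume "\<not> ?thesis"
  \<comment> \<open>At a Brouwer fixed point of the \<open>\<psi>\<close>-weighted average of the \<open>fst p\<close>, monotonicity forces
    \<open>\<Sum>\<psi>\<phi> \<ge> 0\<close>, whereas \<open>\<psi>\<phi> = -\<psi>\<^sup>2\<close> and some \<open>\<psi>\<close> is positive.\<close>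
  then have violated: "\<exists>p\<in>F. 0 < \<psi> p x" for x
    unfolding \<phi>_def \<psi>_def by (auto simp: not_le less_max_iff_disj)
  have \<psi>_nonneg: "0 \<le> \<psi> p x" for p x unfolding \<psi>_def by simp
  have sum_pos: "0 < (\<Sum>p\<in>F. \<psi> p x)" for x
    using violated[of x] F \<psi>_nonneg by (metis sum_pos2)
  have \<psi>_cont: "continuous_on UNIV (\<psi> p)" for p
    unfolding \<psi>_def \<phi>_def by (intro continuous_intros)
  obtain x where "(\<Sum>p\<in>F. \<psi> p x) *\<^sub>R x = (\<Sum>p\<in>F. \<psi> p x *\<^sub>R fst p)"
    using weighted_average_fixed_point[of F \<psi> fst] F \<psi>_cont \<psi>_nonneg sum_pos by blast
  then have "0 \<le> (\<Sum>p\<in>F. \<psi> p x) * (\<Sum>p\<in>F. \<psi> p x * \<phi> p x)"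
    unfolding \<phi>_def using monotone_weighted_sum_nonneg[of F "\<lambda>p. \<psi> p x"] F mono \<psi>_nonneg by blast
  then have "0 \<le> (\<Sum>p\<in>F. \<psi> p x * \<phi> p x)"
    using sum_pos[of x] by (simp add: zero_le_mult_iff)
  moreover have "\<psi> p x * \<phi> p x = - (\<psi> p x)\<^sup>2" for p
    unfolding \<psi>_def by (simp add: max_def power2_eq_square)
  moreover have "0 < (\<Sum>p\<in>F. (\<psi> p x)\<^sup>2)"
    using violated[of x] F by (metis sum_pos2 zero_le_power2 zero_less_power)
  ultimately show False by (simp add: sum_negf)
qed

theorem max_monotone_op_minty:
  fixes M :: "'a::euclidean_space \<Rightarrow> 'a set"
  assumes M: "max_monotone_op M"
  shows "\<exists>x. w - x \<in> M x"
proof -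
  define G where "G = {(y, v). v \<in> M y}"
  define C where "C p = {x. 0 \<le> inner (w - x - snd p) (x - fst p)}" for p
  have C_cball: "C p = cball (midpoint (w - snd p) (fst p)) (dist (w - snd p) (fst p) / 2)"
    for p
    unfolding C_def using inner_nonneg_iff_mem_cball[of "w - snd p" _ "fst p"]
    by (simp add: algebra_simps set_eq_iff)
  obtain y0 v0 where p0: "(y0, v0) \<in> G"
    using max_monotone_op_graph_nonempty[OF M] unfolding G_def by blast
  have G_mono: "0 \<le> inner (snd p - snd q) (fst p - fst q)" if "p \<in> G" "q \<in> G" for p q
    using that monotone_opD[OF max_monotone_op_monotone[OF M]] by (auto simp: G_def)
  have "C (y0, v0) \<inter> (\<Inter>p\<in>G. C p) \<noteq> {}"
  proof (rule compact_imp_fip_image)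
    fix I assume I: "finite I" "I \<subseteq> G"
    have "\<exists>x. \<forall>p\<in>insert (y0, v0) I. 0 \<le> inner (w - x - snd p) (x - fst p)"
      using I p0 by (intro finite_monotone_extension) (auto intro: G_mono)
    then show "C (y0, v0) \<inter> (\<Inter>p\<in>I. C p) \<noteq> {}" unfolding C_def by blast
  qed (simp_all add: C_cball)
  then obtain x where x: "\<And>p. p \<in> G \<Longrightarrow> x \<in> C p" by blast
  have "w - x \<in> M x"
  proof (rule max_monotone_opI[OF M])
    fix y v assume "v \<in> M y"
    then show "0 \<le> inner (w - x - v) (x - y)" using x[of "(y, v)"] unfolding G_def C_def by simp
  qed
  then show ?thesis by blast
qed

lemma resolvent_eqI:
  assumes "monotone_op M" and x: "w - x \<in> M x"
  shows "resolvent M w = x"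
  unfolding resolvent_def
proof (rule the_equality)
  fix y assume y: "w - y \<in> M y"
  have "0 \<le> inner ((w - x) - (w - y)) (x - y)" by (rule monotone_opD[OF assms(1) x y])
  then have "inner (x - y) (x - y) \<le> 0" by (simp add: inner_diff_left inner_diff_right inner_commute)
  then show "y = x" by (metis inner_eq_zero_iff inner_ge_zero order_antisym right_minus_eq)
qed (rule x)

lemma resolvent_mem:
  assumes "max_monotone_op M"
  shows "w - resolvent M w \<in> M (resolvent M w)"
proof -
  obtain x where "w - x \<in> M x" using max_monotone_op_minty[OF assms] by blast
  with resolvent_eqI[OF max_monotone_op_monotone[OF assms]] show ?thesis by simp
qed

section \<open>Cocoercive operators\<close>

lemma cocoercive_opD:
  "cocoercive_op \<beta> M \<Longrightarrow> u \<in> M x \<Longrightarrow> v \<in> M y \<Longrightarrow> \<beta> * (norm (u - v))\<^sup>2 \<le> inner (u - v) (x - y)"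
  unfolding cocoercive_op_def by blast

lemma cocoercive_op_scaleR:
  assumes "cocoercive_op \<beta> B" and "\<beta> \<ge> 0" and "u \<in> B x" and "v \<in> B y"
  shows "(norm (\<beta> *\<^sub>R (u - v)))\<^sup>2 \<le> inner (\<beta> *\<^sub>R (u - v)) (x - y)"
proof -
  have "\<beta> * (\<beta> * (norm (u - v))\<^sup>2) \<le> \<beta> * inner (u - v) (x - y)"
    using cocoercive_opD[OF assms(1,3,4)] assms(2) by (rule mult_left_mono)
  then show ?thesis using assms(2) by (simp add: power2_eq_square mult_ac)
qed

lemma cocoercive_op_norm_le:
  assumes "cocoercive_op \<beta> B" and "u \<in> B x" and "v \<in> B y"
  shows "\<beta> * norm (u - v) \<le> norm (x - y)"
proof (cases "u = v")
  case False
  have "\<beta> * (norm (u - v))\<^sup>2 \<le> inner (u - v) (x - y)" by (rule cocoercive_opD[OF assms])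
  also have "\<dots> \<le> norm (u - v) * norm (x - y)" by (rule norm_cauchy_schwarz)
  finally show ?thesis using False by (simp add: power2_eq_square mult.assoc[symmetric])
qed simp

lemma max_monotone_cocoercive_op_nonempty:
  assumes B: "max_monotone_op B" and "\<beta> > 0" and co: "cocoercive_op \<beta> B"
  shows "\<exists>v. v \<in> B x"
proof -
  \<comment> \<open>\<open>C = \<beta>\<inverse> B\<inverse> - I\<close> is maximally monotone because \<open>B\<close> is \<open>\<beta>\<close>-cocoercive\<close>
  define C where "C v = {s. v \<in> B (\<beta> *\<^sub>R (s + v))}" for v
  have C_mem: "y /\<^sub>R \<beta> - u \<in> C u" if "u \<in> B y" for u y
    unfolding C_def using that \<open>\<beta> > 0\<close> by (simp add: algebra_simps)
  have key: "inner (v - v') (\<beta> *\<^sub>R (s + v) - \<beta> *\<^sub>R (s' + v'))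
      = \<beta> * (inner (s - s') (v - v') + (norm (v - v'))\<^sup>2)" for s s' v v' :: 'a
    by (simp add: inner_diff_left inner_diff_right inner_add_right power2_norm_eq_inner
        inner_commute algebra_simps)
  have "max_monotone_op C" unfolding max_monotone_op_def monotone_op_def
  proof (intro conjI allI impI)
    fix s s' v v' assume "s \<in> C v" "s' \<in> C v'"
    then have "\<beta> * (norm (v - v'))\<^sup>2 \<le> inner (v - v') (\<beta> *\<^sub>R (s + v) - \<beta> *\<^sub>R (s' + v'))"
      unfolding C_def mem_Collect_eq by (rule cocoercive_opD[OF co])
    then show "0 \<le> inner (s - s') (v - v')" using \<open>\<beta> > 0\<close> unfolding key by simp
  next
    fix v s assume H: "\<forall>v' s'. s' \<in> C v' \<longrightarrow> 0 \<le> inner (s - s') (v - v')"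
    have "v \<in> B (\<beta> *\<^sub>R (s + v))"
    proof (rule max_monotone_opI[OF B])
      fix y u assume "u \<in> B y"
      then have "0 \<le> inner (s - (y /\<^sub>R \<beta> - u)) (v - u)" using H C_mem by blast
      then show "0 \<le> inner (v - u) (\<beta> *\<^sub>R (s + v) - y)"
        using key[where s' = "y /\<^sub>R \<beta> - u" and v' = u] \<open>\<beta> > 0\<close> by simp
    qed
    then show "s \<in> C v" unfolding C_def by simp
  qed
  then obtain v where "x /\<^sub>R \<beta> - v \<in> C v" using max_monotone_op_minty by blast
  then have "v \<in> B x" unfolding C_def using \<open>\<beta> > 0\<close> by simp
  then show ?thesis ..
qed

lemma max_monotone_cocoercive_op_single_valued:
  assumes "max_monotone_op B" and "\<beta> > 0" and co: "cocoercive_op \<beta> B"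
  obtains f where "\<And>x. B x = {f x}" and "(1 / \<beta>)-lipschitz_on UNIV f"
proof
  define f where "f x = (SOME v. v \<in> B x)" for x
  have f_mem: "f x \<in> B x" for x
    unfolding f_def using max_monotone_cocoercive_op_nonempty[OF assms] by (rule someI_ex)
  have f_le: "\<beta> * norm (u - f y) \<le> norm (x - y)" if "u \<in> B x" for u x y
    using cocoercive_op_norm_le[OF co that f_mem] .
  show "B x = {f x}" for x
    using f_le[of _ x x] f_mem \<open>\<beta> > 0\<close> by (auto simp: mult_le_0_iff)
  show "(1 / \<beta>)-lipschitz_on UNIV f"
    using f_le[OF f_mem] \<open>\<beta> > 0\<close> by (intro lipschitz_onI) (auto simp: dist_norm field_simps)
qed

lemma closed_max_monotone_op_selection:
  assumes A: "max_monotone_op A" and g: "continuous_on UNIV g"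
  shows "closed {x. g x \<in> A x}"
proof -
  have "{x. g x \<in> A x} = (\<Inter>(y, u)\<in>{(y, u). u \<in> A y}. {x. 0 \<le> inner (g x - u) (x - y)})"
  proof (intro set_eqI iffI)
    fix x assume "x \<in> {x. g x \<in> A x}"
    then show "x \<in> (\<Inter>(y, u)\<in>{(y, u). u \<in> A y}. {x. 0 \<le> inner (g x - u) (x - y)})"
      using monotone_opD[OF max_monotone_op_monotone[OF A]] by blast
  next
    fix x assume "x \<in> (\<Inter>(y, u)\<in>{(y, u). u \<in> A y}. {x. 0 \<le> inner (g x - u) (x - y)})"
    then show "x \<in> {x. g x \<in> A x}" using max_monotone_opI[OF A] by blast
  qed
  also have "closed \<dots>"
    by (intro closed_INT ballI, clarify, intro closed_Collect_le continuous_intros g)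
  finally show ?thesis .
qed

lemma closed_solution_set:
  assumes "max_monotone_op A" and "max_monotone_op B" and "\<beta> > 0" and "cocoercive_op \<beta> B"
  shows "closed (solution_set A B)"
proof -
  obtain f where f: "\<And>x. B x = {f x}" and "(1 / \<beta>)-lipschitz_on UNIV f"
    using max_monotone_cocoercive_op_single_valued[OF assms(2-4)] by blast
  then have "continuous_on UNIV (\<lambda>x. - f x)"
    by (intro continuous_intros lipschitz_on_continuous_on)
  moreover have "solution_set A B = {x. - f x \<in> A x}"
    unfolding solution_set_def f by (auto simp: eq_neg_iff_add_eq_0[symmetric])
  ultimately show ?thesis using closed_max_monotone_op_selection[OF assms(1)] by simp
qed

section \<open>The Douglas--Rachford operator\<close>

lemma DR_op_fixed_point:
  assumes A: "monotone_op A" and B: "monotone_op B" and "\<gamma> > 0"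
    and "- v \<in> A p" and "v \<in> B p"
  shows "p + \<gamma> *\<^sub>R v \<in> fixed_points (DR_op lam \<gamma> A B)"
proof -
  have "resolvent (scale_op \<gamma> B) (p + \<gamma> *\<^sub>R v) = p"
    using assms by (intro resolvent_eqI monotone_op_scale_op) (auto simp: scale_op_mem_iff)
  then have RB: "reflected_resolvent (scale_op \<gamma> B) (p + \<gamma> *\<^sub>R v) = p - \<gamma> *\<^sub>R v"
    unfolding reflected_resolvent_def by (simp add: algebra_simps scaleR_2)
  have "resolvent (scale_op \<gamma> A) (p - \<gamma> *\<^sub>R v) = p"
    using assms by (intro resolvent_eqI monotone_op_scale_op) (auto simp: scale_op_mem_iff)
  then have RA: "reflected_resolvent (scale_op \<gamma> A) (p - \<gamma> *\<^sub>R v) = p + \<gamma> *\<^sub>R v"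
    unfolding reflected_resolvent_def by (simp add: algebra_simps scaleR_2)
  show ?thesis unfolding fixed_points_def mem_Collect_eq DR_op_def RB RA by (simp add: algebra_simps)
qed

lemma DR_op_residual:
  "w - DR_op lam \<gamma> A B w
     = lam *\<^sub>R (resolvent (scale_op \<gamma> B) w
                - resolvent (scale_op \<gamma> A) (2 *\<^sub>R resolvent (scale_op \<gamma> B) w - w))"
proof -
  have "w - ((1 - lam / 2) *\<^sub>R w + (lam / 2) *\<^sub>R (2 *\<^sub>R a - (2 *\<^sub>R b - w))) = lam *\<^sub>R (b - a)"
    for a b :: 'a
    by (simp add: algebra_simps)
  then show ?thesis unfolding DR_op_def reflected_resolvent_def .
qed

lemma DR_certificate_coefficient_nonneg:
  fixes t \<nu> :: real
  assumes "0 < t" "t \<le> 1" "0 < \<nu>" "\<nu> \<le> t"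
  shows "\<nu>\<^sup>2 * t\<^sup>2 \<le> (2 + t) * ((1 + t)\<^sup>2 * (2 - t) - 2 * (1 + t) * \<nu> * (1 - t) - 2 * \<nu>\<^sup>2 * t)"
proof -
  define P where "P = (1 + t)\<^sup>2 * (2 - t) - 2 * (1 + t) * \<nu> * (1 - t) - 2 * \<nu>\<^sup>2 * t"
  have "2 * \<nu> * ((1 + t) * (1 - t)) \<le> (1 + t) * ((1 + t) * (1 - t))"
    using assms by (intro mult_right_mono) auto
  then have "P \<ge> (1 + t)\<^sup>2 - 2 * \<nu>\<^sup>2 * t"
    unfolding P_def by (simp add: algebra_simps power2_eq_square)
  moreover have "(1 + t)\<^sup>2 = 1 + 2 * t + t\<^sup>2" by (simp add: power2_eq_square algebra_simps)
  moreover have "0 \<le> t\<^sup>2" and "\<nu>\<^sup>2 * t \<le> t" and small: "\<nu>\<^sup>2 * t\<^sup>2 \<le> 1"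
    using assms by (simp_all add: power_le_one mult_le_one power_mult_distrib[symmetric])
  ultimately have "1 \<le> P" by linarith
  then have "1 \<le> (2 + t) * P" using assms by (smt (verit) mult_le_cancel_right1)
  then show ?thesis using small unfolding P_def by linarith
qed

lemma norm_le_of_cocoercive_inequalities:
  fixes d e G H :: "'a::real_inner"
  assumes t: "0 < t" "t \<le> 1" and \<nu>: "0 < \<nu>" "\<nu> \<le> t"
    and G: "(norm G)\<^sup>2 \<le> inner G e" and H: "(norm H)\<^sup>2 \<le> inner H d"
    and e: "\<nu> * (norm e)\<^sup>2 \<le> inner d e - t * inner H e"
  shows "\<nu> * norm (e + t *\<^sub>R G + t *\<^sub>R H) \<le> (1 + t) * norm d"
proof -
  define \<rho> where "\<rho> = 1 + t"
  define c where "c = (2 + t) * (\<rho>\<^sup>2 * (2 - t) - 2 * \<rho> * \<nu> * (1 - t) - 2 * \<nu>\<^sup>2 * t) - \<nu>\<^sup>2 * t\<^sup>2"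
  define X where "X = \<rho> *\<^sub>R d - (\<rho> * \<nu>) *\<^sub>R e - (t * (\<rho> - \<nu>)) *\<^sub>R H"
  define Y where "Y = (2 + t) *\<^sub>R (e - G) + t *\<^sub>R H"
  define r where "r = e + t *\<^sub>R G + t *\<^sub>R H"
  define slack where "slack = 2 * \<rho> * \<nu>\<^sup>2 * t * (inner G e - (norm G)\<^sup>2)
    + 2 * \<rho> * t * (\<rho> - \<nu>) * (inner H d - (norm H)\<^sup>2)
    + 2 * \<nu> * \<rho>\<^sup>2 * (inner d e - t * inner H e - \<nu> * (norm e)\<^sup>2)"
  have certificate: "(2 + t) * (\<rho>\<^sup>2 * (norm d)\<^sup>2 - \<nu>\<^sup>2 * (norm r)\<^sup>2)
      = (2 + t) * slack + (2 + t) * (norm X)\<^sup>2 + \<nu>\<^sup>2 * t * (norm Y)\<^sup>2 + t * c * (norm H)\<^sup>2"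
    unfolding X_def Y_def r_def c_def slack_def \<rho>_def power2_norm_eq_inner
    by (simp add: inner_add_left inner_add_right inner_diff_left inner_diff_right inner_commute
        algebra_simps power2_eq_square)
  have "0 \<le> c" unfolding c_def \<rho>_def using DR_certificate_coefficient_nonneg[OF t \<nu>] by simp
  moreover have "0 \<le> slack" unfolding slack_def \<rho>_def using G H e t \<nu> by simp
  ultimately have "0 \<le> (2 + t) * (\<rho>\<^sup>2 * (norm d)\<^sup>2 - \<nu>\<^sup>2 * (norm r)\<^sup>2)"
    unfolding certificate using t by simp
  then have "(\<nu> * norm r)\<^sup>2 \<le> (\<rho> * norm d)\<^sup>2"
    using t by (simp add: zero_le_mult_iff power_mult_distrib)
  then show ?thesis unfolding r_def \<rho>_def by (rule power2_le_imp_le) (use t in simp)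
qed

lemma cocoercive_DR_estimate:
  assumes co: "cocoercive_op \<beta> B" and "\<beta> > 0" and "0 < \<gamma>" "\<gamma> \<le> \<beta>" and "0 < \<nu>" "\<nu> \<le> \<gamma> / \<beta>"
    and b: "b \<in> B z" and v: "v \<in> B x" and bs: "bs \<in> B p"
    and step: "\<gamma> *\<^sub>R (a + b) = z - x"
    and strong: "\<nu> * (norm (x - p))\<^sup>2 \<le> \<gamma> * inner (a + v) (x - p)"
  shows "\<nu> * norm (x - p + \<gamma> *\<^sub>R (b - bs)) \<le> (1 + \<gamma> / \<beta>) * norm (z - x)"
proof -
  define t where "t = \<gamma> / \<beta>"
  define G where "G = \<beta> *\<^sub>R (v - bs)"
  define H where "H = \<beta> *\<^sub>R (b - v)"
  have t: "0 < t" "t \<le> 1" "\<nu> \<le> t" unfolding t_def using assms by auto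
  have \<gamma>: "\<gamma> = t * \<beta>" unfolding t_def using \<open>\<beta> > 0\<close> by simp
  have cG: "(norm G)\<^sup>2 \<le> inner G (x - p)"
    unfolding G_def using cocoercive_op_scaleR[OF co _ v bs] \<open>\<beta> > 0\<close> by simp
  have cH: "(norm H)\<^sup>2 \<le> inner H (z - x)"
    unfolding H_def using cocoercive_op_scaleR[OF co _ b v] \<open>\<beta> > 0\<close> by simp
  have "\<gamma> * inner (a + v) (x - p) = inner (z - x) (x - p) - t * inner H (x - p)"
    unfolding step[symmetric] H_def \<gamma> by (simp add: inner_add_left inner_diff_left algebra_simps)
  then have "\<nu> * (norm (x - p))\<^sup>2 \<le> inner (z - x) (x - p) - t * inner H (x - p)"
    using strong by simp
  then have "\<nu> * norm (x - p + t *\<^sub>R G + t *\<^sub>R H) \<le> (1 + t) * norm (z - x)"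
    by (rule norm_le_of_cocoercive_inequalities[OF t(1,2) \<open>0 < \<nu>\<close> t(3) cG cH])
  moreover have "t *\<^sub>R G + t *\<^sub>R H = \<gamma> *\<^sub>R (b - bs)"
    unfolding G_def H_def \<gamma> by (simp add: algebra_simps)
  ultimately show ?thesis unfolding t_def by (simp add: add.assoc)
qed

lemma DR_op_infdist_fixed_points_le:
  fixes A B :: "'a::euclidean_space \<Rightarrow> 'a set"
  assumes A: "max_monotone_op A" and B: "max_monotone_op B"
    and "\<beta> > 0" and co: "cocoercive_op \<beta> B"
    and X: "solution_set A B \<noteq> {}" and rsm: "restricted_strongly_monotone \<mu>f A B"
    and "0 < lam" and "0 < \<gamma>" and "\<gamma> \<le> \<beta>"
    and m: "0 < m" "m \<le> \<mu>f * \<beta>" "m \<le> 1"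
  shows "infdist w (fixed_points (DR_op lam \<gamma> A B))
           \<le> (\<gamma> + \<gamma> * m + \<beta>) / (lam * \<gamma> * m) * norm (w - DR_op lam \<gamma> A B w)"
proof -
  define z where "z = resolvent (scale_op \<gamma> B) w"
  define x where "x = resolvent (scale_op \<gamma> A) (2 *\<^sub>R z - w)"
  define b where "b = (w - z) /\<^sub>R \<gamma>"
  define a where "a = (2 *\<^sub>R z - w - x) /\<^sub>R \<gamma>"
  have b_mem: "b \<in> B z" and a_mem: "a \<in> A x"
    unfolding a_def b_def z_def x_def
    using resolvent_mem[OF max_monotone_op_scale_op[OF A \<open>\<gamma> > 0\<close>]]
      resolvent_mem[OF max_monotone_op_scale_op[OF B \<open>\<gamma> > 0\<close>]] \<open>\<gamma> > 0\<close>
    by (simp_all add: scale_op_mem_iff)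
  have step: "\<gamma> *\<^sub>R (a + b) = z - x"
    unfolding a_def b_def using \<open>\<gamma> > 0\<close> by (simp add: algebra_simps scaleR_2)
  obtain v where v: "v \<in> B x"
    using max_monotone_cocoercive_op_nonempty[OF B \<open>\<beta> > 0\<close> co] by blast
  define p where "p = closest_point (solution_set A B) x"
  have "p \<in> solution_set A B"
    unfolding p_def using closed_solution_set[OF A B \<open>\<beta> > 0\<close> co] X by (rule closest_point_in_set)
  then obtain bs where bs: "- bs \<in> A p" "bs \<in> B p"
    unfolding solution_set_def by (auto simp: eq_neg_iff_add_eq_0[symmetric])
  have fixed: "p + \<gamma> *\<^sub>R bs \<in> fixed_points (DR_op lam \<gamma> A B)"
    using A B \<open>\<gamma> > 0\<close> bs by (intro DR_op_fixed_point max_monotone_op_monotone)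
  define \<nu> where "\<nu> = \<gamma> * m / \<beta>"
  have "\<nu> \<le> \<gamma> * \<mu>f"
    unfolding \<nu>_def using m \<open>\<beta> > 0\<close> \<open>\<gamma> > 0\<close> by (simp add: field_simps mult_left_mono)
  then have "\<nu> * (norm (x - p))\<^sup>2 \<le> \<gamma> * (\<mu>f * (norm (x - p))\<^sup>2)"
    by (simp add: mult_right_mono mult.assoc[symmetric])
  also have "\<dots> \<le> \<gamma> * inner (a + v) (x - p)"
    using rsm a_mem v \<open>\<gamma> > 0\<close> unfolding restricted_strongly_monotone_def p_def by simp
  finally have "\<nu> * norm (x - p + \<gamma> *\<^sub>R (b - bs)) \<le> (1 + \<gamma> / \<beta>) * norm (z - x)"
    using \<open>\<beta> > 0\<close> \<open>\<gamma> > 0\<close> \<open>\<gamma> \<le> \<beta>\<close> m b_mem v bs(2) step unfolding \<nu>_def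
    by (intro cocoercive_DR_estimate[OF co]) (auto simp: field_simps)
  then have "norm (x - p + \<gamma> *\<^sub>R (b - bs)) \<le> (\<gamma> + \<beta>) / (\<gamma> * m) * norm (z - x)"
    unfolding \<nu>_def using \<open>\<beta> > 0\<close> \<open>\<gamma> > 0\<close> m by (simp add: field_simps)
  then have "norm (w - (p + \<gamma> *\<^sub>R bs)) \<le> norm (z - x) + (\<gamma> + \<beta>) / (\<gamma> * m) * norm (z - x)"
    using norm_triangle_ineq[of "z - x" "x - p + \<gamma> *\<^sub>R (b - bs)"] \<open>\<gamma> > 0\<close>
    unfolding b_def by (simp add: algebra_simps)
  also have "\<dots> = (\<gamma> + \<gamma> * m + \<beta>) / (\<gamma> * m) * norm (z - x)"
    using \<open>\<gamma> > 0\<close> m by (simp add: field_simps)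
  also have "\<dots> = (\<gamma> + \<gamma> * m + \<beta>) / (lam * \<gamma> * m) * norm (w - DR_op lam \<gamma> A B w)"
    unfolding DR_op_residual z_def[symmetric] x_def[symmetric] using \<open>0 < lam\<close> by simp
  finally show ?thesis
    using infdist_le[OF fixed, of w] by (simp add: dist_norm)
qed

theorem proposition2:
  fixes A B :: "'a::euclidean_space \<Rightarrow> 'a set"
    and \<beta> \<mu>f lam \<gamma> :: real and w1 :: 'a
  assumes "max_monotone_op A" and "max_monotone_op B"
    and "\<beta> > 0" and "cocoercive_op \<beta> B"
    and "solution_set A B \<noteq> {}"
    and "\<mu>f > 0" and "restricted_strongly_monotone \<mu>f A B"
    and "0 < lam" and "lam < 2"
    and "0 < \<gamma>" and "\<gamma> \<le> \<beta>"
    and "fixed_points (DR_op lam \<gamma> A B) \<noteq> {}"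
  shows "error_bound_on (DR_op lam \<gamma> A B)
           {w. infdist w (fixed_points (DR_op lam \<gamma> A B))
                 \<le> infdist w1 (fixed_points (DR_op lam \<gamma> A B))}
           ((\<gamma> + \<gamma> * min (\<mu>f * \<beta>) 1 + \<beta>) / (lam * \<gamma> * min (\<mu>f * \<beta>) 1))"
proof -
  define m where "m = min (\<mu>f * \<beta>) 1"
  have m: "0 < m" "m \<le> \<mu>f * \<beta>" "m \<le> 1" unfolding m_def using assms(3,6) by auto
  \<comment> \<open>The bound holds on the whole space.\<close>
  have "infdist w (fixed_points (DR_op lam \<gamma> A B))
          \<le> (\<gamma> + \<gamma> * m + \<beta>) / (lam * \<gamma> * m) * norm (w - DR_op lam \<gamma> A B w)" for w
    using DR_op_infdist_fixed_points_le[OF assms(1-5,7,8,10,11) m] .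
  moreover have "0 \<le> (\<gamma> + \<gamma> * m + \<beta>) / (lam * \<gamma> * m)" using assms(3,8,10) m by simp
  ultimately show ?thesis unfolding error_bound_on_def m_def by blast
qed


end
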